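(* Let $A=(a_1,\dots,a_k)$ be a minimal telescopic sequence of positive integers (no $a_i$ is an $\mathbb{N}_0$-linear combination of the other terms). Then: (i) for all distinct $x,y,z\in\{1,\dots,k\}$, at least one of $\gcd(a_x,a_y)$, $\gcd(a_x,a_z)$, $\gcd(a_y,a_z)$ is greater than $1$; and (ii) for all distinct $x,y,z,w\in\{1,\dots,k\}$, either $\gcd(a_x,a_y)>1$ or $\gcd(a_z,a_w)>1$.
   Context: For a sequence $A=(a_1,\dots,a_k)$ of non-negative integers, let $d_i=\gcd(a_1,\dots,a_i)$ and $S_i=\langle a_1,\dots,a_i\rangle$ (the set of $\mathbb{N}_0$-linear combinations of $a_1,\dots,a_i$) for $i\in\{1,\dots,k\}$, and let $c_j=d_{j-1}/d_j$ for $j\in\{2,\dots,k\}$. The sequence $A$ is telescopic if $c_ja_j\in S_{j-1}$ for all $j\in\{2,\dots,k\}$. *)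

theory Defs
  imports Main
begin

text \<open>Sequences A = (a_1,...,a_k) are lists; the paper's index i corresponds to list
position i-1.\<close>

definition semigroup_gen :: "nat list \<Rightarrow> nat set" where
  "semigroup_gen xs = {n. \<exists>cs :: nat list. length cs = length xs \<and>
      n = (\<Sum>i<length xs. cs ! i * xs ! i)}"

definition seq_d :: "nat list \<Rightarrow> nat \<Rightarrow> nat" where
  "seq_d A i = Gcd (set (take i A))"

definition seq_S :: "nat list \<Rightarrow> nat \<Rightarrow> nat set" where
  "seq_S A i = semigroup_gen (take i A)"

definition seq_c :: "nat list \<Rightarrow> nat \<Rightarrow> nat" where
  "seq_c A j = seq_d A (j - 1) div seq_d A j"

definition telescopic :: "nat list \<Rightarrow> bool" where
  "telescopic A \<longleftrightarrow> (\<forall>j\<in>{2..length A}. seq_c A j * A ! (j - 1) \<in> seq_S A (j - 1))"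

definition minimal_seq :: "nat list \<Rightarrow> bool" where
  "minimal_seq A \<longleftrightarrow> (\<forall>i<length A. A ! i \<notin> semigroup_gen (take i A @ drop (Suc i) A))"

end

theory Submission
  imports Defs
begin

text \<open>If d_j = 1 for some j < k, then d_{j+1} = 1 as well, so c_{j+1} = 1 and telescopy puts
  a_{j+1} into S_j, contradicting minimality. Hence d_{k-1} > 1 (positivity excludes d_{k-1} = 0),
  so any two of a_1, ..., a_{k-1} share the factor d_{k-1}. Among three distinct indices, or among
  two disjoint pairs, at most one index is k, which leaves a pair inside {1, ..., k-1}.\<close>

lemma semigroup_gen_append:
  assumes "n \<in> semigroup_gen xs"
  shows "n \<in> semigroup_gen (xs @ ys)"
proof -
  from assms obtain cs where cs: "length cs = length xs" "n = (\<Sum>i<length xs. cs ! i * xs ! i)"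
    unfolding semigroup_gen_def by auto
  define cs' where "cs' = cs @ replicate (length ys) 0"
  have "(\<Sum>i<length (xs @ ys). cs' ! i * (xs @ ys) ! i) = (\<Sum>i<length xs. cs' ! i * (xs @ ys) ! i)"
    by (rule sum.mono_neutral_right) (auto simp: cs'_def cs nth_append)
  also have "\<dots> = n"
    using cs by (simp add: cs'_def nth_append)
  finally show ?thesis
    unfolding semigroup_gen_def by (intro CollectI exI[of _ cs']) (simp add: cs'_def cs)
qed

lemma seq_d_Suc_dvd: "seq_d A (Suc j) dvd seq_d A j"
  unfolding seq_d_def
  by (intro Gcd_greatest Gcd_dvd) (meson le_SucI order_refl set_take_subset_set_take subsetD)

lemma seq_d_dvd_nth:
  assumes "i < j" "i < length A"
  shows "seq_d A j dvd A ! i"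
  unfolding seq_d_def using assms by (intro Gcd_dvd) (auto simp: in_set_conv_nth)

lemma telescopic_minimal_seq_d_neq_1:
  assumes tele: "telescopic A" and mini: "minimal_seq A" and j: "j < length A"
  shows "seq_d A j \<noteq> 1"
proof
  assume d1: "seq_d A j = 1"
  then have "j \<noteq> 0"
    by (cases j) (simp_all add: seq_d_def)
  have "seq_d A (Suc j) = 1"
    using seq_d_Suc_dvd[of A j] d1 by simp
  with d1 have "seq_c A (Suc j) = 1"
    by (simp add: seq_c_def)
  moreover have "Suc j \<in> {2..length A}"
    using j \<open>j \<noteq> 0\<close> by simp
  ultimately have "A ! j \<in> seq_S A j"
    using tele unfolding telescopic_def by fastforce
  then have "A ! j \<in> semigroup_gen (take j A @ drop (Suc j) A)"
    unfolding seq_S_def by (rule semigroup_gen_append)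
  with mini j show False
    unfolding minimal_seq_def by blast
qed

lemma telescopic_minimal_gcd_gt_1:
  assumes pos: "\<forall>a\<in>set A. a > 0" and tele: "telescopic A" and mini: "minimal_seq A"
    and p: "p < length A - 1" and q: "q < length A - 1"
  shows "gcd (A ! p) (A ! q) > 1"
proof -
  let ?d = "seq_d A (length A - 1)"
  have "?d dvd gcd (A ! p) (A ! q)"
    using p q by (simp add: seq_d_dvd_nth)
  moreover have "gcd (A ! p) (A ! q) > 0"
    using pos p by auto
  ultimately have "?d \<noteq> 0" "?d \<le> gcd (A ! p) (A ! q)"
    by (auto intro: dvd_imp_le)
  moreover have "?d \<noteq> 1"
    using telescopic_minimal_seq_d_neq_1[OF tele mini] p by simp
  ultimately show ?thesis
    by linarith
qed

theorem mainTheorem12: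
  fixes A :: "nat list"
  assumes pos: "\<forall>a\<in>set A. a > 0"
    and tele: "telescopic A"
    and mini: "minimal_seq A"
  shows "(\<forall>x<length A. \<forall>y<length A. \<forall>z<length A.
            x \<noteq> y \<and> x \<noteq> z \<and> y \<noteq> z \<longrightarrow>
            gcd (A ! x) (A ! y) > 1 \<or> gcd (A ! x) (A ! z) > 1 \<or> gcd (A ! y) (A ! z) > 1)
       \<and> (\<forall>x<length A. \<forall>y<length A. \<forall>z<length A. \<forall>w<length A.
            distinct [x, y, z, w] \<longrightarrow>
            gcd (A ! x) (A ! y) > 1 \<or> gcd (A ! z) (A ! w) > 1)"
proof -
  have pair: "gcd (A ! p) (A ! q) > 1"
    if "p < length A" "q < length A" "p \<noteq> length A - 1" "q \<noteq> length A - 1" for p q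
    using telescopic_minimal_gcd_gt_1[OF pos tele mini, of p q] that by simp
  show ?thesis
  proof (intro conjI allI impI)
    fix x y z
    assume "x < length A" "y < length A" "z < length A" "x \<noteq> y \<and> x \<noteq> z \<and> y \<noteq> z"
    then show "gcd (A ! x) (A ! y) > 1 \<or> gcd (A ! x) (A ! z) > 1 \<or> gcd (A ! y) (A ! z) > 1"
      using pair[of x y] pair[of x z] pair[of y z] by blast
  next
    fix x y z w
    assume "x < length A" "y < length A" "z < length A" "w < length A" "distinct [x, y, z, w]"
    then show "gcd (A ! x) (A ! y) > 1 \<or> gcd (A ! z) (A ! w) > 1"
      using pair[of x y] pair[of z w] by auto
  qed
qed

end
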